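(* Let $C_1$ and $C_2$ be maximal configurations of finite labeled prime event structures $\mathcal{E}_1$ and $\mathcal{E}_2$, respectively. If $C_1\sqsubset_S C_2$, then $\mathcal{L}(C_1)\subseteq\mathcal{L}(C_2)$.
   Context: A finite $\mathcal{X}$-labeled prime event structure is $\mathcal{E}=\langle E,<,\#,h\rangle$ with finite $E$, strict partial order $<$, labeling $h:E\to\mathcal{X}$, and symmetric irreflexive conflict relation $\#$ closed under $<$; $\mathcal{X}$ contains $\varepsilon$ denoting the empty word; there is an event $\bot$ below all other events with $h(\bot)=\varepsilon$. A configuration is a left-closed, conflict-free subset of $E$; maximal if no configuration strictly contains it. A trace of a configuration $C$ lists every event of $C$ exactly once such that $e_i<e_j$ implies $i<j$; $\mathcal{L}(C)=\{h(t)\mid t$ a trace of $C\}$ (labels applied pointwise, $\varepsilon$ omitted). For $\mathcal{E}_i=\langle E_i,<_i,\#_i,h_i\rangle$, a mapping $\varphi:C_1\to C_2$ is a sufficient embedding if (A) $\varphi$ is bijective, (B) $h_1(e)=h_2(\varphi(e))$ for all $e\in C_1$, and (C) for all $e_1,e_2\in C_1$, $\varphi(e_1)<_2\varphi(e_2)$ implies $e_1<_1e_2$. $C_1\sqsubset_S C_2$ means a sufficient embedding from $C_1$ to $C_2$ exists. *)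

theory Defs
  imports Main
begin

text \<open>A finite X-labeled prime event structure E = (E, <, #, h); eps is the
  distinguished label denoting the empty word.\<close>
definition pes :: "'x \<Rightarrow> 'e set \<Rightarrow> ('e \<Rightarrow> 'e \<Rightarrow> bool) \<Rightarrow> ('e \<Rightarrow> 'e \<Rightarrow> bool) \<Rightarrow> ('e \<Rightarrow> 'x) \<Rightarrow> bool" where
  "pes eps E lt cf h \<longleftrightarrow>
     finite E
   \<and> (\<forall>x y. lt x y \<longrightarrow> x \<in> E \<and> y \<in> E)
   \<and> (\<forall>x\<in>E. \<not> lt x x)
   \<and> (\<forall>x\<in>E. \<forall>y\<in>E. \<forall>z\<in>E. lt x y \<and> lt y z \<longrightarrow> lt x z)
   \<and> (\<forall>x y. cf x y \<longrightarrow> x \<in> E \<and> y \<in> E)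
   \<and> (\<forall>x\<in>E. \<not> cf x x)
   \<and> (\<forall>x\<in>E. \<forall>y\<in>E. cf x y \<longrightarrow> cf y x)
   \<and> (\<forall>x\<in>E. \<forall>y\<in>E. \<forall>z\<in>E. cf x y \<and> lt y z \<longrightarrow> cf x z)
   \<and> (\<exists>b\<in>E. h b = eps \<and> (\<forall>e\<in>E. e \<noteq> b \<longrightarrow> lt b e))"

definition configuration :: "'e set \<Rightarrow> ('e \<Rightarrow> 'e \<Rightarrow> bool) \<Rightarrow> ('e \<Rightarrow> 'e \<Rightarrow> bool) \<Rightarrow> 'e set \<Rightarrow> bool" where
  "configuration E lt cf C \<longleftrightarrow>
     C \<subseteq> E
   \<and> (\<forall>e\<in>C. \<forall>e'\<in>E. lt e' e \<longrightarrow> e' \<in> C)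
   \<and> (\<forall>e\<in>C. \<forall>e'\<in>C. \<not> cf e e')"

definition maximal_configuration :: "'e set \<Rightarrow> ('e \<Rightarrow> 'e \<Rightarrow> bool) \<Rightarrow> ('e \<Rightarrow> 'e \<Rightarrow> bool) \<Rightarrow> 'e set \<Rightarrow> bool" where
  "maximal_configuration E lt cf C \<longleftrightarrow>
     configuration E lt cf C \<and> \<not> (\<exists>C'. configuration E lt cf C' \<and> C \<subset> C')"

definition is_trace :: "('e \<Rightarrow> 'e \<Rightarrow> bool) \<Rightarrow> 'e set \<Rightarrow> 'e list \<Rightarrow> bool" where
  "is_trace lt C t \<longleftrightarrow>
     distinct t \<and> set t = C
   \<and> (\<forall>i<length t. \<forall>j<length t. lt (t ! i) (t ! j) \<longrightarrow> i < j)"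

definition lang :: "'x \<Rightarrow> ('e \<Rightarrow> 'e \<Rightarrow> bool) \<Rightarrow> ('e \<Rightarrow> 'x) \<Rightarrow> 'e set \<Rightarrow> 'x list set" where
  "lang eps lt h C = {filter (\<lambda>a. a \<noteq> eps) (map h t) | t. is_trace lt C t}"

definition sufficient_embedding ::
  "('e1 \<Rightarrow> 'e1 \<Rightarrow> bool) \<Rightarrow> ('e1 \<Rightarrow> 'x) \<Rightarrow> 'e1 set \<Rightarrow>
   ('e2 \<Rightarrow> 'e2 \<Rightarrow> bool) \<Rightarrow> ('e2 \<Rightarrow> 'x) \<Rightarrow> 'e2 set \<Rightarrow> ('e1 \<Rightarrow> 'e2) \<Rightarrow> bool" where
  "sufficient_embedding lt1 h1 C1 lt2 h2 C2 \<phi> \<longleftrightarrow>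
     bij_betw \<phi> C1 C2
   \<and> (\<forall>e\<in>C1. h1 e = h2 (\<phi> e))
   \<and> (\<forall>e1\<in>C1. \<forall>e2\<in>C1. lt2 (\<phi> e1) (\<phi> e2) \<longrightarrow> lt1 e1 e2)"

definition suff_embeds ::
  "('e1 \<Rightarrow> 'e1 \<Rightarrow> bool) \<Rightarrow> ('e1 \<Rightarrow> 'x) \<Rightarrow> 'e1 set \<Rightarrow>
   ('e2 \<Rightarrow> 'e2 \<Rightarrow> bool) \<Rightarrow> ('e2 \<Rightarrow> 'x) \<Rightarrow> 'e2 set \<Rightarrow> bool" where
  "suff_embeds lt1 h1 C1 lt2 h2 C2 \<longleftrightarrow> (\<exists>\<phi>. sufficient_embedding lt1 h1 C1 lt2 h2 C2 \<phi>)"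

end

theory Submission
  imports Defs
begin

(* A sufficient embedding maps every trace of C1 to a trace of C2 with the same
   label word: bijectivity makes the image list an enumeration of C2, and since the
   embedding reflects causality, the image list still respects the order of E2. *)

lemma is_trace_map_sufficient_embedding:
  assumes emb: "sufficient_embedding lt1 h1 C1 lt2 h2 C2 \<phi>"
    and t: "is_trace lt1 C1 t"
  shows "is_trace lt2 C2 (map \<phi> t)"
  unfolding is_trace_def
proof (intro conjI allI impI)
  have bij: "bij_betw \<phi> C1 C2"
    and reflects: "\<forall>e1\<in>C1. \<forall>e2\<in>C1. lt2 (\<phi> e1) (\<phi> e2) \<longrightarrow> lt1 e1 e2"
    using emb unfolding sufficient_embedding_def by auto
  have distinct: "distinct t" and set_t: "set t = C1"
    and ordered: "\<forall>i<length t. \<forall>j<length t. lt1 (t ! i) (t ! j) \<longrightarrow> i < j"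
    using t unfolding is_trace_def by auto
  show "distinct (map \<phi> t)"
    using distinct set_t bij by (simp add: distinct_map bij_betw_def)
  show "set (map \<phi> t) = C2"
    using set_t bij by (simp add: bij_betw_def)
  fix i j
  assume i: "i < length (map \<phi> t)" and j: "j < length (map \<phi> t)"
    and "lt2 (map \<phi> t ! i) (map \<phi> t ! j)"
  then have "lt1 (t ! i) (t ! j)"
    using reflects set_t by auto
  then show "i < j"
    using ordered i j by auto
qed

lemma map_labels_sufficient_embedding:
  assumes "sufficient_embedding lt1 h1 C1 lt2 h2 C2 \<phi>"
    and "is_trace lt1 C1 t"
  shows "map h2 (map \<phi> t) = map h1 t"
  using assms unfolding sufficient_embedding_def is_trace_def by auto

lemma lang_mono_suff_embeds:
  assumes "suff_embeds lt1 h1 C1 lt2 h2 C2"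
  shows "lang eps lt1 h1 C1 \<subseteq> lang eps lt2 h2 C2"
proof
  fix w
  assume "w \<in> lang eps lt1 h1 C1"
  then obtain t where t: "is_trace lt1 C1 t"
    and w: "w = filter (\<lambda>a. a \<noteq> eps) (map h1 t)"
    unfolding lang_def by blast
  obtain \<phi> where emb: "sufficient_embedding lt1 h1 C1 lt2 h2 C2 \<phi>"
    using assms unfolding suff_embeds_def by blast
  have "is_trace lt2 C2 (map \<phi> t)"
    using is_trace_map_sufficient_embedding[OF emb t] .
  moreover have "w = filter (\<lambda>a. a \<noteq> eps) (map h2 (map \<phi> t))"
    unfolding map_labels_sufficient_embedding[OF emb t] by (rule w)
  ultimately show "w \<in> lang eps lt2 h2 C2"
    unfolding lang_def by blast
qed

theorem lemma2:
  fixes eps :: 'x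
    and E1 :: "'e1 set" and lt1 cf1 :: "'e1 \<Rightarrow> 'e1 \<Rightarrow> bool" and h1 :: "'e1 \<Rightarrow> 'x"
    and E2 :: "'e2 set" and lt2 cf2 :: "'e2 \<Rightarrow> 'e2 \<Rightarrow> bool" and h2 :: "'e2 \<Rightarrow> 'x"
  assumes "pes eps E1 lt1 cf1 h1"
    and "pes eps E2 lt2 cf2 h2"
    and "maximal_configuration E1 lt1 cf1 C1"
    and "maximal_configuration E2 lt2 cf2 C2"
    and "suff_embeds lt1 h1 C1 lt2 h2 C2"
  shows "lang eps lt1 h1 C1 \<subseteq> lang eps lt2 h2 C2"
  using lang_mono_suff_embeds[OF assms(5)] .

end
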